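(* Let $f:\mathbb{R}^n\to\mathbb{R}$ be twice continuously differentiable, $m_{2s}$-restricted strongly convex and $M_{2s}$-restricted strongly smooth. Let $\gamma\le m_{2s}$ and $0<\eta\le 1/(4M_{2s})$. Let $\mathbf x^k\in\mathbb{R}^n$ be $s$-sparse, let $T_k\in\mathcal{T}(\mathbf x^k;\eta)$, and let $\mathbf d^k_N$ be the Newton direction at $(\mathbf x^k,T_k)$. Then $$\langle\nabla_{T_k}f(\mathbf x^k),(\mathbf d^k_N)_{T_k}\rangle\le-\gamma\|\mathbf d^k_N\|^2+\frac{1}{4\eta}\|\mathbf x^k_{T_k^c}\|^2.$$
   Context: Notation: $\|\mathbf x\|_0$ = number of nonzero entries; $s$-sparse means $\|\mathbf x\|_0\le s$; $\mathrm{supp}(\mathbf x)$ = indices of nonzero entries; for $T\subseteq\{1,\dots,n\}$, $T^c$ its complement, $\mathbf x_T$ the subvector indexed by $T$, $\nabla_T f(\mathbf x)=(\nabla f(\mathbf x))_T$, $\nabla^2_{T,J}f(\mathbf x)$ the submatrix of the Hessian with rows in $T$ and columns in $J$, $\nabla^2_T f=\nabla^2_{T,T}f$. $\mathcal{P}_s(\mathbf x)=\mathrm{argmin}_{\mathbf z}\{\|\mathbf x-\mathbf z\|:\|\mathbf z\|_0\le s\}$ (a set). $\mathcal{T}(\mathbf x;\eta)=\{T: |T|=s,\ T\supseteq\mathrm{supp}(\mathbf z)\text{ for some }\mathbf z\in\mathcal{P}_s(\mathbf x-\eta\nabla f(\mathbf x))\}$. For $s$-sparse $\mathbf x$ let $M_{2s}(\mathbf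 x)=\sup\{\langle\mathbf y,\nabla^2 f(\mathbf x)\mathbf y\rangle: |\mathrm{supp}(\mathbf x)\cup\mathrm{supp}(\mathbf y)|\le 2s,\ \|\mathbf y\|=1\}$ and $m_{2s}(\mathbf x)$ the corresponding infimum. $f$ is $M_{2s}$-restricted strongly smooth if there is a constant $M_{2s}>0$ with $M_{2s}(\mathbf x)\le M_{2s}$ for all $s$-sparse $\mathbf x$; $f$ is $m_{2s}$-restricted strongly convex if there is a constant $m_{2s}>0$ with $m_{2s}(\mathbf x)\ge m_{2s}$ for all $s$-sparse $\mathbf x$. The Newton direction $\mathbf d_N^k$ at $(\mathbf x^k,T_k)$ is defined by $\nabla^2_{T_k}f(\mathbf x^k)(\mathbf d^k_N)_{T_k}=\nabla^2_{T_k,T_k^c}f(\mathbf x^k)\mathbf x^k_{T_k^c}-\nabla_{T_k}f(\mathbf x^k)$ and $(\mathbf d^k_N)_{T_k^c}=-\mathbf x^k_{T_k^c}$. *)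

theory Defs
  imports "HOL-Analysis.Analysis"
begin

text \<open>Vectors in R^n are modelled as real^'n. The gradient g and Hessian H of f
are given explicitly and tied to f by the C^2 assumption below.\<close>

definition twice_cont_diff ::
  "(real^'n \<Rightarrow> real) \<Rightarrow> (real^'n \<Rightarrow> real^'n) \<Rightarrow> (real^'n \<Rightarrow> real^'n^'n) \<Rightarrow> bool" where
  "twice_cont_diff f g H \<longleftrightarrow>
     (\<forall>x. (f has_derivative (\<lambda>h. g x \<bullet> h)) (at x)) \<and>
     (\<forall>x. (g has_derivative (\<lambda>h. H x *v h)) (at x)) \<and>
     continuous_on UNIV H"

definition supp :: "real^'n \<Rightarrow> 'n set" where
  "supp x = {i. x $ i \<noteq> 0}"

definition l0 :: "real^'n \<Rightarrow> nat" where
  "l0 x = card (supp x)"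

definition sparse :: "nat \<Rightarrow> real^'n \<Rightarrow> bool" where
  "sparse s x \<longleftrightarrow> l0 x \<le> s"

text \<open>M_{2s}-restricted strong smoothness: M_{2s}(x) <= M for all s-sparse x,
 where M_{2s}(x) is the sup of the quadratic form over the admissible unit y
 (written out as an upper bound on every element of the set).\<close>
definition restricted_strongly_smooth ::
  "(real^'n \<Rightarrow> real^'n^'n) \<Rightarrow> nat \<Rightarrow> real \<Rightarrow> bool" where
  "restricted_strongly_smooth H s M \<longleftrightarrow> M > 0 \<and>
     (\<forall>x y. sparse s x \<longrightarrow> card (supp x \<union> supp y) \<le> 2 * s \<longrightarrow> norm y = 1 \<longrightarrow>
        y \<bullet> (H x *v y) \<le> M)"

definition restricted_strongly_convex ::
  "(real^'n \<Rightarrow> real^'n^'n) \<Rightarrow> nat \<Rightarrow> real \<Rightarrow> bool" where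
  "restricted_strongly_convex H s m \<longleftrightarrow> m > 0 \<and>
     (\<forall>x y. sparse s x \<longrightarrow> card (supp x \<union> supp y) \<le> 2 * s \<longrightarrow> norm y = 1 \<longrightarrow>
        y \<bullet> (H x *v y) \<ge> m)"

definition proj_sparse :: "nat \<Rightarrow> real^'n \<Rightarrow> (real^'n) set" where
  "proj_sparse s x = {z. sparse s z \<and> (\<forall>w. sparse s w \<longrightarrow> norm (x - z) \<le> norm (x - w))}"

definition Tset :: "nat \<Rightarrow> (real^'n \<Rightarrow> real^'n) \<Rightarrow> real^'n \<Rightarrow> real \<Rightarrow> 'n set set" where
  "Tset s g x \<eta> = {T. card T = s \<and>
      (\<exists>z \<in> proj_sparse s (x - \<eta> *\<^sub>R g x). supp z \<subseteq> T)}"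

definition newton_dir ::
  "(real^'n \<Rightarrow> real^'n) \<Rightarrow> (real^'n \<Rightarrow> real^'n^'n) \<Rightarrow> real^'n \<Rightarrow> 'n set \<Rightarrow> real^'n \<Rightarrow> bool" where
  "newton_dir g H x T d \<longleftrightarrow>
     (\<forall>i\<in>T. (\<Sum>j\<in>T. H x $ i $ j * d $ j) = (\<Sum>j\<in>- T. H x $ i $ j * x $ j) - g x $ i) \<and>
     (\<forall>i\<in>- T. d $ i = - x $ i)"

end

(* Split d = v - u with v = d_T and u = x_{T^c}. The Newton equation gives
   <grad_T f, d_T> = <v, H u> - <v, H v>, which for symmetric H equals
   <u, H u>/4 - <w, H w> with w = v - u/2. All of u, w are supported in T \<union> supp x,
   a set of size at most 2s, so restricted strong convexity bounds <w, H w> below by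
   m (|v|^2 + |u|^2/4) and restricted smoothness bounds <u, H u> above by M |u|^2;
   finally M <= 1/(4 eta). Symmetry of H is Schwarz's theorem, obtained from two
   mean-value representations of the mixed second difference of f. *)

theory Submission
  imports Defs
begin

lemma DERIV_along_line:
  fixes F :: "'a::real_normed_vector \<Rightarrow> real"
  assumes "(F has_derivative F') (at (p + t *\<^sub>R q))"
  shows "DERIV (\<lambda>t. F (p + t *\<^sub>R q)) t :> F' q"
proof -
  have line: "((\<lambda>t::real. p + t *\<^sub>R q) has_derivative (\<lambda>h. h *\<^sub>R q)) (at t)"
    by (auto intro!: derivative_eq_intros)
  have "linear F'"
    using assms by (rule has_derivative_linear)
  then have "(\<lambda>h. F' (h *\<^sub>R q)) = (\<lambda>h. F' q * h)"
    by (auto simp: linear_scale)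
  then show ?thesis
    using has_derivative_compose[OF line assms] by (simp add: has_field_derivative_def)
qed

lemma mixed_second_difference_mean_value:
  fixes H :: "real^'n \<Rightarrow> real^'n^'n"
  assumes "twice_cont_diff f g H" and "r > 0"
  shows "\<exists>z. norm (z - y) \<le> r * (norm a + norm b) \<and>
     f (y + r *\<^sub>R a + r *\<^sub>R b) - f (y + r *\<^sub>R a) - f (y + r *\<^sub>R b) + f y = r\<^sup>2 * ((H z *v a) \<bullet> b)"
proof -
  have df: "\<And>y. (f has_derivative (\<lambda>h. g y \<bullet> h)) (at y)"
    and dg: "\<And>y. ((\<lambda>y. g y \<bullet> b) has_derivative (\<lambda>h. (H y *v h) \<bullet> b)) (at y)"
    using assms(1) unfolding twice_cont_diff_def by (auto intro!: derivative_eq_intros)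
  define \<psi> where "\<psi> t = f ((y + r *\<^sub>R a) + t *\<^sub>R b) - f (y + t *\<^sub>R b)" for t
  have "DERIV \<psi> t :> g ((y + r *\<^sub>R a) + t *\<^sub>R b) \<bullet> b - g (y + t *\<^sub>R b) \<bullet> b" for t
    unfolding \<psi>_def by (intro derivative_intros DERIV_along_line df)
  from MVT2[OF \<open>r > 0\<close> this] obtain \<xi> where \<xi>: "0 < \<xi>" "\<xi> < r"
    "\<psi> r - \<psi> 0 = r * (g ((y + r *\<^sub>R a) + \<xi> *\<^sub>R b) \<bullet> b - g (y + \<xi> *\<^sub>R b) \<bullet> b)"
    by auto
  have "DERIV (\<lambda>t. g ((y + \<xi> *\<^sub>R b) + t *\<^sub>R a) \<bullet> b) t :> (H ((y + \<xi> *\<^sub>R b) + t *\<^sub>R a) *v a) \<bullet> b" for t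
    by (rule DERIV_along_line[OF dg])
  from MVT2[OF \<open>r > 0\<close> this] obtain \<rho> where \<rho>: "0 < \<rho>" "\<rho> < r"
    "g ((y + \<xi> *\<^sub>R b) + r *\<^sub>R a) \<bullet> b - g (y + \<xi> *\<^sub>R b) \<bullet> b
      = r * ((H ((y + \<xi> *\<^sub>R b) + \<rho> *\<^sub>R a) *v a) \<bullet> b)"
    by auto
  define z where "z = y + \<xi> *\<^sub>R b + \<rho> *\<^sub>R a"
  have "norm (z - y) \<le> norm (\<xi> *\<^sub>R b) + norm (\<rho> *\<^sub>R a)"
    unfolding z_def using norm_triangle_ineq[of "\<xi> *\<^sub>R b" "\<rho> *\<^sub>R a"] by (simp add: add.assoc)
  also have "\<dots> \<le> r * (norm a + norm b)"
    using mult_right_mono[of \<xi> r "norm b"] mult_right_mono[of \<rho> r "norm a"] \<xi> \<rho>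
    by (simp add: distrib_left)
  finally have "norm (z - y) \<le> r * (norm a + norm b)" .
  moreover have "(y + r *\<^sub>R a) + \<xi> *\<^sub>R b = (y + \<xi> *\<^sub>R b) + r *\<^sub>R a"
    by (simp add: algebra_simps)
  then have "f (y + r *\<^sub>R a + r *\<^sub>R b) - f (y + r *\<^sub>R a) - f (y + r *\<^sub>R b) + f y = r\<^sup>2 * ((H z *v a) \<bullet> b)"
    using \<xi>(3) \<rho>(3) unfolding \<psi>_def z_def by (simp add: power2_eq_square algebra_simps)
  ultimately show ?thesis
    by blast
qed

lemma hessian_form_tendsto_at_right:
  fixes H :: "real^'n \<Rightarrow> real^'n^'n"
  assumes "twice_cont_diff f g H" and "\<And>r. r > 0 \<Longrightarrow> norm (z r - y) \<le> r * c"
  shows "((\<lambda>r. (H (z r) *v p) \<bullet> q) \<longlongrightarrow> (H y *v p) \<bullet> q) (at_right 0)"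
proof -
  have "continuous_on UNIV H"
    using assms(1) unfolding twice_cont_diff_def by blast
  then have "continuous_on UNIV (\<lambda>w. (H w *v p) \<bullet> q)"
    unfolding matrix_vector_mult_def inner_vec_def
    by (intro continuous_intros continuous_on_component)
  then have "isCont (\<lambda>w. (H w *v p) \<bullet> q) y"
    by (simp add: continuous_on_eq_continuous_at)
  moreover have "\<forall>\<^sub>F r in at_right 0. norm (z r - y) \<le> norm r * c"
    using eventually_at_right_less[of 0] by eventually_elim (use assms(2) in auto)
  then have "((\<lambda>r. z r - y) \<longlongrightarrow> 0) (at_right (0::real))"
    by (intro tendsto_0_le[OF tendsto_ident_at]) auto
  then have "(z \<longlongrightarrow> y) (at_right 0)"
    by (simp add: Lim_null[symmetric])
  ultimately show ?thesis
    by (rule isCont_tendsto_compose)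
qed

lemma hessian_symmetric:
  fixes H :: "real^'n \<Rightarrow> real^'n^'n"
  assumes "twice_cont_diff f g H"
  shows "(H y *v a) \<bullet> b = (H y *v b) \<bullet> a"
proof -
  have "\<forall>r. \<exists>z. r > 0 \<longrightarrow> norm (z - y) \<le> r * (norm p + norm q) \<and>
     f (y + r *\<^sub>R p + r *\<^sub>R q) - f (y + r *\<^sub>R p) - f (y + r *\<^sub>R q) + f y = r\<^sup>2 * ((H z *v p) \<bullet> q)" for p q
    using mixed_second_difference_mean_value[OF assms] by blast
  then obtain z1 z2 where
    z1: "\<And>r. r > 0 \<Longrightarrow> norm (z1 r - y) \<le> r * (norm a + norm b) \<and>
       f (y + r *\<^sub>R a + r *\<^sub>R b) - f (y + r *\<^sub>R a) - f (y + r *\<^sub>R b) + f y = r\<^sup>2 * ((H (z1 r) *v a) \<bullet> b)" and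
    z2: "\<And>r. r > 0 \<Longrightarrow> norm (z2 r - y) \<le> r * (norm b + norm a) \<and>
       f (y + r *\<^sub>R b + r *\<^sub>R a) - f (y + r *\<^sub>R b) - f (y + r *\<^sub>R a) + f y = r\<^sup>2 * ((H (z2 r) *v b) \<bullet> a)"
    by metis
  \<comment> \<open>both mean values represent the same second difference of f\<close>
  have "(H (z2 r) *v b) \<bullet> a = (H (z1 r) *v a) \<bullet> b" if "r > 0" for r
  proof -
    have swap: "y + r *\<^sub>R b + r *\<^sub>R a = y + r *\<^sub>R a + r *\<^sub>R b"
      by (simp add: algebra_simps)
    have "r\<^sup>2 * ((H (z2 r) *v b) \<bullet> a) = r\<^sup>2 * ((H (z1 r) *v a) \<bullet> b)"
      using z1[OF that] z2[OF that, unfolded swap] by linarith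
    then show ?thesis
      using that by simp
  qed
  then have "\<forall>\<^sub>F r in at_right 0. (H (z2 r) *v b) \<bullet> a = (H (z1 r) *v a) \<bullet> b"
    using eventually_at_right_less[of 0] by (auto elim: eventually_mono)
  moreover have "((\<lambda>r. (H (z2 r) *v b) \<bullet> a) \<longlongrightarrow> (H y *v b) \<bullet> a) (at_right 0)"
    by (rule hessian_form_tendsto_at_right[OF assms]) (use z2 in blast)
  ultimately have "((\<lambda>r. (H (z1 r) *v a) \<bullet> b) \<longlongrightarrow> (H y *v b) \<bullet> a) (at_right 0)"
    by (rule Lim_transform_eventually[rotated])
  moreover have "((\<lambda>r. (H (z1 r) *v a) \<bullet> b) \<longlongrightarrow> (H y *v a) \<bullet> b) (at_right 0)"
    by (rule hessian_form_tendsto_at_right[OF assms]) (use z1 in blast)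
  ultimately show ?thesis
    using tendsto_unique[OF trivial_limit_at_right_real] by blast
qed

lemma supp_scaleR: "c \<noteq> 0 \<Longrightarrow> supp (c *\<^sub>R y) = supp y"
  unfolding supp_def by auto

lemma quadratic_form_normalize:
  fixes A :: "real^'n^'n"
  assumes "y \<noteq> 0"
  shows "y \<bullet> (A *v y) = (norm y)\<^sup>2 * (((1 / norm y) *\<^sub>R y) \<bullet> (A *v ((1 / norm y) *\<^sub>R y)))"
  using assms by (simp add: matrix_vector_mult_scaleR power2_eq_square)

lemma restricted_strongly_convex_quadratic_form:
  assumes "restricted_strongly_convex H s m" and "sparse s x" and "card (supp x \<union> supp y) \<le> 2 * s"
  shows "m * (norm y)\<^sup>2 \<le> y \<bullet> (H x *v y)"
proof (cases "y = 0")
  case False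
  then have "supp ((1 / norm y) *\<^sub>R y) = supp y" and "norm ((1 / norm y) *\<^sub>R y) = 1"
    by (simp_all add: supp_scaleR)
  then have "m \<le> ((1 / norm y) *\<^sub>R y) \<bullet> (H x *v ((1 / norm y) *\<^sub>R y))"
    using assms unfolding restricted_strongly_convex_def by metis
  from mult_right_mono[OF this zero_le_power2[of "norm y"]] show ?thesis
    unfolding quadratic_form_normalize[OF False] by (simp only: mult.commute)
qed simp

lemma restricted_strongly_smooth_quadratic_form:
  assumes "restricted_strongly_smooth H s M" and "sparse s x" and "card (supp x \<union> supp y) \<le> 2 * s"
  shows "y \<bullet> (H x *v y) \<le> M * (norm y)\<^sup>2"
proof (cases "y = 0")
  case False
  then have "supp ((1 / norm y) *\<^sub>R y) = supp y" and "norm ((1 / norm y) *\<^sub>R y) = 1"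
    by (simp_all add: supp_scaleR)
  then have "((1 / norm y) *\<^sub>R y) \<bullet> (H x *v ((1 / norm y) *\<^sub>R y)) \<le> M"
    using assms unfolding restricted_strongly_smooth_def by metis
  from mult_right_mono[OF this zero_le_power2[of "norm y"]] show ?thesis
    unfolding quadratic_form_normalize[OF False] by (simp only: mult.commute)
qed simp

lemma card_supp_Un_le:
  assumes "card T = s" and "sparse s x" and "supp y \<subseteq> T \<union> supp x"
  shows "card (supp x \<union> supp y) \<le> 2 * s"
proof -
  have "card (supp x \<union> supp y) \<le> card (T \<union> supp x)"
    using assms(3) by (intro card_mono) auto
  also have "\<dots> \<le> card T + card (supp x)"
    by (rule card_Un_le)
  finally show ?thesis
    using assms(1,2) unfolding sparse_def l0_def by linarith
qed

definition vec_restrict :: "'n set \<Rightarrow> real^'n \<Rightarrow> real^'n" where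
  "vec_restrict T v = (\<chi> i. if i \<in> T then v $ i else 0)"

lemma inner_vec_restrict: "vec_restrict T v \<bullet> w = (\<Sum>i\<in>T. v $ i * w $ i)"
  proof -
  have "vec_restrict T v \<bullet> w = (\<Sum>i\<in>UNIV. if i \<in> T then v $ i * w $ i else 0)"
    unfolding inner_vec_def vec_restrict_def by (auto intro: sum.cong)
  then show ?thesis
    by (simp add: sum.If_cases)
qed

lemma matrix_vector_mult_vec_restrict: "(A *v vec_restrict T v) $ i = (\<Sum>j\<in>T. A $ i $ j * v $ j)"
  unfolding matrix_vector_mult_def vec_restrict_def by (simp add: sum.If_cases if_distrib)

lemma inner_vec_restrict_Compl: "vec_restrict T v \<bullet> vec_restrict (- T) w = 0"
  unfolding inner_vec_restrict by (simp add: vec_restrict_def)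

lemma norm_vec_restrict_power2: "(norm (vec_restrict T v))\<^sup>2 = (\<Sum>i\<in>T. (v $ i)\<^sup>2)"
  unfolding power2_norm_eq_inner inner_vec_restrict by (simp add: vec_restrict_def power2_eq_square)

lemma newton_dir_eq:
  assumes "newton_dir g H x T d"
  shows "d = vec_restrict T d - vec_restrict (- T) x"
  using assms unfolding newton_dir_def vec_restrict_def by (auto simp: vec_eq_iff)

lemma newton_dir_gradient_inner:
  assumes "newton_dir g H x T d"
  shows "(\<Sum>i\<in>T. g x $ i * d $ i) =
    vec_restrict T d \<bullet> (H x *v vec_restrict (- T) x) - vec_restrict T d \<bullet> (H x *v vec_restrict T d)"
  using assms unfolding newton_dir_def inner_vec_restrict matrix_vector_mult_vec_restrict
  by (simp add: right_diff_distrib sum_subtractf mult.commute)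

lemma quadratic_form_split_bound:
  fixes A :: "'a::real_inner \<Rightarrow> 'a"
  assumes "linear A" and sym: "A v \<bullet> u = A u \<bullet> v" and orth: "v \<bullet> u = 0"
    and lower_w: "m * (norm (v - (1/2) *\<^sub>R u))\<^sup>2 \<le> (v - (1/2) *\<^sub>R u) \<bullet> A (v - (1/2) *\<^sub>R u)"
    and lower_u: "m * (norm u)\<^sup>2 \<le> u \<bullet> A u" and upper_u: "u \<bullet> A u \<le> M * (norm u)\<^sup>2"
  shows "v \<bullet> A u - v \<bullet> A v \<le> - m * (norm (v - u))\<^sup>2 + M * (norm u)\<^sup>2"
proof -
  define w where "w = v - (1/2) *\<^sub>R u"
  have "w \<bullet> A w = v \<bullet> A v - v \<bullet> A u + u \<bullet> A u / 4"
    using sym unfolding w_def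
    by (simp add: linear_diff[OF \<open>linear A\<close>] linear_scale[OF \<open>linear A\<close>]
        inner_diff_left inner_diff_right inner_commute)
  moreover have "m * (norm w)\<^sup>2 = m * (norm v)\<^sup>2 + m * (norm u)\<^sup>2 / 4"
    using orth unfolding w_def power2_norm_eq_inner
    by (simp add: inner_diff_left inner_diff_right inner_commute algebra_simps)
  moreover have "m * (norm (v - u))\<^sup>2 = m * (norm v)\<^sup>2 + m * (norm u)\<^sup>2"
    using orth unfolding power2_norm_eq_inner
    by (simp add: inner_diff_left inner_diff_right inner_commute algebra_simps)
  ultimately show ?thesis
    using lower_w lower_u upper_u unfolding w_def by linarith
qed

theorem lemma5:
  fixes f :: "real^'n \<Rightarrow> real" and g :: "real^'n \<Rightarrow> real^'n" and H :: "real^'n \<Rightarrow> real^'n^'n"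
    and s :: nat and m M \<gamma> \<eta> :: real and x d :: "real^'n" and T :: "'n set"
  assumes "twice_cont_diff f g H"
    and "restricted_strongly_convex H s m"
    and "restricted_strongly_smooth H s M"
    and "\<gamma> \<le> m"
    and "0 < \<eta>" and "\<eta> \<le> 1 / (4 * M)"
    and "sparse s x"
    and "T \<in> Tset s g x \<eta>"
    and "newton_dir g H x T d"
  shows "(\<Sum>i\<in>T. g x $ i * d $ i)
           \<le> - \<gamma> * (norm d)\<^sup>2 + 1 / (4 * \<eta>) * (\<Sum>i\<in>- T. (x $ i)\<^sup>2)"
proof -
  define v u where "v = vec_restrict T d" and "u = vec_restrict (- T) x"
  have "card T = s"
    using assms(8) unfolding Tset_def by blast
  moreover have "supp (v - (1/2) *\<^sub>R u) \<subseteq> T \<union> supp x" and "supp u \<subseteq> T \<union> supp x"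
    unfolding v_def u_def supp_def vec_restrict_def by auto
  ultimately have "card (supp x \<union> supp (v - (1/2) *\<^sub>R u)) \<le> 2 * s" and "card (supp x \<union> supp u) \<le> 2 * s"
    using card_supp_Un_le assms(7) by blast+
  then have "v \<bullet> (H x *v u) - v \<bullet> (H x *v v) \<le> - m * (norm (v - u))\<^sup>2 + M * (norm u)\<^sup>2"
    using assms(2,3,7) unfolding v_def u_def
    by (intro quadratic_form_split_bound matrix_vector_mul_linear hessian_symmetric[OF assms(1)]
        inner_vec_restrict_Compl restricted_strongly_convex_quadratic_form
        restricted_strongly_smooth_quadratic_form)
  moreover have "M \<le> 1 / (4 * \<eta>)"
    using assms(3,5,6) unfolding restricted_strongly_smooth_def by (simp add: field_simps)
  then have "M * (norm u)\<^sup>2 \<le> 1 / (4 * \<eta>) * (\<Sum>i\<in>- T. (x $ i)\<^sup>2)"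
    unfolding u_def norm_vec_restrict_power2 by (rule mult_right_mono) (simp add: sum_nonneg)
  moreover have "norm (v - u) = norm d"
    unfolding v_def u_def by (rule arg_cong[OF newton_dir_eq[OF assms(9), symmetric]])
  then have "- m * (norm (v - u))\<^sup>2 \<le> - \<gamma> * (norm d)\<^sup>2"
    using assms(4) by (simp add: mult_right_mono)
  ultimately show ?thesis
    using newton_dir_gradient_inner[OF assms(9)] unfolding v_def u_def by linarith
qed

end
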